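(* Let $(G_k)_{k\in\mathbb Z}$ be a gibonacci sequence, let $\lambda = G_1^2 - G_0G_2$, and let $F_k$ denote the Fibonacci numbers. For every positive integer $n$ and all integers $t$ and $m$, \begin{equation*} \begin{split} &5\sum_{j = 1}^n (-F_{m - 3})^{n - j} (F_{m + 2})^j G_{j + t - 1} G_{j + t} G_{j + t + 1} G_{j + t + 2} G_{j + t + m}\\ &\qquad = F_{m + 2}^{n + 1} G_{n + t + 1}^5 - (-F_{m - 3})^n F_{m + 2} G_{t + 1}^5 - \lambda^2\left(F_{m + 2}^{n + 1} G_{n + t + 1} - (-F_{m - 3})^n F_{m + 2} G_{t + 1}\right). \end{split} \end{equation*}
   Context: A gibonacci sequence $(G_k)_{k\in\mathbb Z}$ is defined by arbitrary initial values $G_0=a$, $G_1=b$ (numbers, not both zero) and $G_k=G_{k-1}+G_{k-2}$ for all integers $k$. The Fibonacci numbers $F_k$ are the gibonacci sequence with $F_0=0$, $F_1=1$, extended to all integer indices by the same recurrence. The convention $0^0=1$ is used for powers. *)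

theory Defs
  imports "HOL-Analysis.Analysis" "HOL-Number_Theory.Fib"
begin

definition gibonacci :: "(int \<Rightarrow> real) \<Rightarrow> bool" where
  "gibonacci G \<longleftrightarrow> (\<forall>k. G k = G (k - 1) + G (k - 2)) \<and> \<not> (G 0 = 0 \<and> G 1 = 0)"

text \<open>Fibonacci numbers extended to all integer indices by the same recurrence
  (F_{-n} = (-1)^(n+1) F_n).\<close>
definition fibz :: "int \<Rightarrow> real" where
  "fibz k = (if k \<ge> 0 then real (fib (nat k))
             else (-1) ^ (nat (-k) + 1) * real (fib (nat (-k))))"

end

theory Submission
  imports Defs
begin

text \<open>Write \<open>x = G\<^sub>k\<^sub>+\<^sub>1\<close> and \<open>y = G\<^sub>k\<close>. Then \<open>G\<^sub>k\<^sub>-\<^sub>1 = x - y\<close>, \<open>G\<^sub>k\<^sub>+\<^sub>2 = x + y\<close>,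
  \<open>G\<^sub>k\<^sub>+\<^sub>m = F\<^sub>m x + F\<^sub>m\<^sub>-\<^sub>1 y\<close>, and \<open>(x\<^sup>2 - xy - y\<^sup>2)\<^sup>2 = \<lambda>\<^sup>2\<close> for every \<open>k\<close>, since
  \<open>x\<^sup>2 - xy - y\<^sup>2\<close> only changes sign when \<open>k\<close> increases.
  A polynomial identity in \<open>x, y\<close> then gives
  \<open>5 G\<^sub>k\<^sub>-\<^sub>1 G\<^sub>k G\<^sub>k\<^sub>+\<^sub>1 G\<^sub>k\<^sub>+\<^sub>2 G\<^sub>k\<^sub>+\<^sub>m = F\<^sub>m\<^sub>+\<^sub>2 T\<^sub>k\<^sub>+\<^sub>1 + F\<^sub>m\<^sub>-\<^sub>3 T\<^sub>k\<close> with \<open>T\<^sub>k = G\<^sub>k\<^sup>5 - \<lambda>\<^sup>2 G\<^sub>k\<close>,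
  and the weighted sum telescopes.\<close>

lemma fibz_of_nat: "fibz (int n) = real (fib n)"
  by (simp add: fibz_def)

lemma fibz_uminus_of_nat: "fibz (- int n) = (-1) ^ (n + 1) * real (fib n)"
  by (cases "n = 0") (simp_all add: fibz_def)

lemma fibz_0 [simp]: "fibz 0 = 0"
  and fibz_1 [simp]: "fibz 1 = 1"
  and fibz_minus_1 [simp]: "fibz (- 1) = 1"
  using fibz_of_nat[of 0] fibz_of_nat[of 1] fibz_uminus_of_nat[of 1] by simp_all

lemma fibz_add_two: "fibz (k + 2) = fibz (k + 1) + fibz k"
proof -
  consider n where "k = int n" | "k = - 1" | n where "k = - int (n + 2)"
  proof (cases "k \<ge> 0")
    case True
    then show ?thesis using that(1)[of "nat k"] by simp
  next
    case False
    then show ?thesis using that(2) that(3)[of "nat (- k - 2)"] by (cases "k = - 1") simp_all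
  qed
  then show ?thesis
  proof cases
    case 1
    then show ?thesis
      using fibz_of_nat[of "n + 2"] fibz_of_nat[of "n + 1"] fibz_of_nat[of n]
      by (simp add: add.commute)
  next
    case 2
    then show ?thesis by simp
  next
    case 3
    have k2: "k + 2 = - int n" and k1: "k + 1 = - int (n + 1)" using 3 by simp_all
    have "fibz (k + 2) = - ((-1) ^ n * real (fib n))"
      unfolding k2 fibz_uminus_of_nat by simp
    moreover have "fibz (k + 1) = (-1) ^ n * real (fib (n + 1))"
      unfolding k1 fibz_uminus_of_nat by simp
    moreover have "fibz k = - ((-1) ^ n * real (fib (n + 2)))"
      unfolding 3 fibz_uminus_of_nat by simp
    ultimately show ?thesis by (simp add: fib_plus_2 algebra_simps)
  qed
qed

lemma gibonacci_add_two:
  assumes "gibonacci G"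
  shows "G (k + 2) = G (k + 1) + G k"
proof -
  have shift: "k + 2 - 1 = k + 1" "k + 2 - 2 = k" by simp_all
  show ?thesis using assms unfolding gibonacci_def by (metis shift)
qed

lemma fib_recurrence_pred:
  fixes H :: "int \<Rightarrow> 'a::ab_group_add"
  assumes rec: "\<And>k. H (k + 2) = H (k + 1) + H k"
  shows "H (k - 1) = H (k + 1) - H k"
proof -
  have shift: "k - 1 + 2 = k + 1" "k - 1 + 1 = k" by simp_all
  show ?thesis using rec[of "k - 1"] unfolding shift by (metis add_diff_cancel_left')
qed

lemma fib_recurrence_unique:
  fixes H K :: "int \<Rightarrow> 'a::ab_group_add"
  assumes H: "\<And>k. H (k + 2) = H (k + 1) + H k"
    and K: "\<And>k. K (k + 2) = K (k + 1) + K k"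
    and "H 0 = K 0" and "H 1 = K 1"
  shows "H k = K k"
proof -
  define D where "D k = H k - K k" for k
  have D_rec: "D (k + 2) = D (k + 1) + D k" for k
    unfolding D_def by (simp add: H K algebra_simps)
  have "D k = 0 \<and> D (k + 1) = 0"
  proof (induction k rule: int_induct[where k = 0])
    case base
    show ?case using assms(3,4) by (simp add: D_def)
  next
    case (step1 i)
    then show ?case using D_rec[of i] by (simp add: add.assoc)
  next
    case (step2 i)
    then show ?case using fib_recurrence_pred[OF D_rec, of i] by simp
  qed
  then show ?thesis by (simp add: D_def)
qed

lemma fib_recurrence_add:
  fixes H :: "int \<Rightarrow> real"
  assumes rec: "\<And>k. H (k + 2) = H (k + 1) + H k"
  shows "H (k + m) = fibz m * H (k + 1) + fibz (m - 1) * H k"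
proof (rule fib_recurrence_unique[where H = "\<lambda>m. H (k + m)"])
  show "H (k + (m + 2)) = H (k + (m + 1)) + H (k + m)" for m
    using rec[of "k + m"] by (simp add: add.assoc)
  show "fibz (m + 2) * H (k + 1) + fibz (m + 2 - 1) * H k =
      fibz (m + 1) * H (k + 1) + fibz (m + 1 - 1) * H k + (fibz m * H (k + 1) + fibz (m - 1) * H k)"
    for m using fibz_add_two[of m] fibz_add_two[of "m - 1"] by (simp add: algebra_simps)
qed simp_all

lemma fib_recurrence_invariant_sq:
  fixes H :: "int \<Rightarrow> 'a::comm_ring_1"
  assumes rec: "\<And>k. H (k + 2) = H (k + 1) + H k"
  shows "(H (k + 1) ^ 2 - H (k + 1) * H k - H k ^ 2) ^ 2 = (H 1 ^ 2 - H 0 * H 2) ^ 2"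
proof -
  define q where "q k = H (k + 1) ^ 2 - H (k + 1) * H k - H k ^ 2" for k
  have q_succ: "q (k + 1) = - q k" for k
    using rec[of k] by (simp add: q_def add.assoc power2_eq_square algebra_simps)
  have "q k ^ 2 = q 0 ^ 2"
  proof (induction k rule: int_induct[where k = 0])
    case (step1 i)
    then show ?case by (simp add: q_succ)
  next
    case (step2 i)
    then show ?case using q_succ[of "i - 1"] by simp
  qed simp
  moreover have "q 0 = H 1 ^ 2 - H 0 * H 2"
    using rec[of 0] by (simp add: q_def power2_eq_square algebra_simps)
  ultimately show ?thesis by (simp only: q_def)
qed

lemma quintic_identity:
  fixes x y f g l :: real
  assumes "l ^ 2 = (x ^ 2 - x * y - y ^ 2) ^ 2"
  shows "5 * ((x - y) * y * x * (x + y) * (f * x + g * y)) =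
    (2 * f + g) * (x ^ 5 - l ^ 2 * x) + (2 * g - f) * (y ^ 5 - l ^ 2 * y)"
  unfolding assms by algebra

lemma fib_recurrence_product_five:
  fixes H :: "int \<Rightarrow> real"
  assumes rec: "\<And>k. H (k + 2) = H (k + 1) + H k"
    and lam: "lam = H 1 ^ 2 - H 0 * H 2"
  shows "5 * (H (k - 1) * H k * H (k + 1) * H (k + 2) * H (k + m)) =
    fibz (m + 2) * (H (k + 1) ^ 5 - lam ^ 2 * H (k + 1)) + fibz (m - 3) * (H k ^ 5 - lam ^ 2 * H k)"
proof -
  have "H (k - 1) = H (k + 1) - H k" by (rule fib_recurrence_pred[OF rec])
  moreover have "H (k + 2) = H (k + 1) + H k" by (rule rec)
  moreover have "H (k + m) = fibz m * H (k + 1) + fibz (m - 1) * H k"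
    by (rule fib_recurrence_add[OF rec])
  moreover have "fibz (m + 2) = 2 * fibz m + fibz (m - 1)"
    using fibz_add_two[of m] fib_recurrence_pred[OF fibz_add_two, of m] by linarith
  moreover have "fibz (m - 3) = 2 * fibz (m - 1) - fibz m"
  proof -
    have shift: "m - 1 - 1 = m - 2" "m - 1 + 1 = m" "m - 2 - 1 = m - 3" "m - 2 + 1 = m - 1"
      by simp_all
    show ?thesis
      using fib_recurrence_pred[OF fibz_add_two, of "m - 1"] fib_recurrence_pred[OF fibz_add_two, of "m - 2"]
      unfolding shift by linarith
  qed
  moreover have "lam ^ 2 = (H (k + 1) ^ 2 - H (k + 1) * H k - H k ^ 2) ^ 2"
    using fib_recurrence_invariant_sq[OF rec, of k] lam by simp
  ultimately show ?thesis using quintic_identity by simp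
qed

lemma sum_weighted_telescope:
  fixes a b :: "'a::comm_ring_1" and T :: "nat \<Rightarrow> 'a"
  shows "(\<Sum>j=1..n. a ^ (n - j) * b ^ j * (b * T (Suc j) - a * T j)) =
    b ^ (n + 1) * T (Suc n) - a ^ n * b * T 1"
proof (induction n)
  case (Suc n)
  let ?u = "\<lambda>j. b * T (Suc j) - a * T j"
  have "(\<Sum>j=1..n. a ^ (Suc n - j) * b ^ j * ?u j) = a * (\<Sum>j=1..n. a ^ (n - j) * b ^ j * ?u j)"
    unfolding sum_distrib_left by (rule sum.cong) (auto simp: Suc_diff_le)
  then have "(\<Sum>j=1..Suc n. a ^ (Suc n - j) * b ^ j * ?u j)
      = a * (b ^ (n + 1) * T (Suc n) - a ^ n * b * T 1) + b ^ Suc n * ?u (Suc n)"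
    using Suc.IH by simp
  also have "\<dots> = b ^ (Suc n + 1) * T (Suc (Suc n)) - a ^ Suc n * b * T 1"
    by (simp add: algebra_simps)
  finally show ?case .
qed simp

theorem proposition2:
  fixes G :: "int \<Rightarrow> real" and n :: nat and t m :: int
  assumes "gibonacci G" and "n \<ge> 1"
  defines "lam \<equiv> (G 1)^2 - G 0 * G 2"
  shows "5 * (\<Sum>j=1..n. (- fibz (m - 3)) ^ (n - j) * (fibz (m + 2)) ^ j *
            G (int j + t - 1) * G (int j + t) * G (int j + t + 1) * G (int j + t + 2) * G (int j + t + m))
       = fibz (m + 2) ^ (n + 1) * G (int n + t + 1) ^ 5
         - (- fibz (m - 3)) ^ n * fibz (m + 2) * G (t + 1) ^ 5
         - lam^2 * (fibz (m + 2) ^ (n + 1) * G (int n + t + 1)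
                  - (- fibz (m - 3)) ^ n * fibz (m + 2) * G (t + 1))"
proof -
  note rec = gibonacci_add_two[OF assms(1)]
  define a b where "a = - fibz (m - 3)" and "b = fibz (m + 2)"
  define T where "T j = G (int j + t) ^ 5 - lam ^ 2 * G (int j + t)" for j :: nat
  have summand: "5 * (G (int j + t - 1) * G (int j + t) * G (int j + t + 1) * G (int j + t + 2) * G (int j + t + m))
      = b * T (Suc j) - a * T j" for j
    using fib_recurrence_product_five[OF rec lam_def[THEN meta_eq_to_obj_eq], of "int j + t" m]
    by (simp add: a_def b_def T_def add.commute add.left_commute)
  have "5 * (\<Sum>j=1..n. a ^ (n - j) * b ^ j *
        G (int j + t - 1) * G (int j + t) * G (int j + t + 1) * G (int j + t + 2) * G (int j + t + m))
      = (\<Sum>j=1..n. a ^ (n - j) * b ^ j *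
        (5 * (G (int j + t - 1) * G (int j + t) * G (int j + t + 1) * G (int j + t + 2) * G (int j + t + m))))"
    by (simp add: sum_distrib_left mult_ac)
  also have "\<dots> = (\<Sum>j=1..n. a ^ (n - j) * b ^ j * (b * T (Suc j) - a * T j))"
    by (simp only: summand)
  also have "\<dots> = b ^ (n + 1) * T (Suc n) - a ^ n * b * T 1"
    by (rule sum_weighted_telescope)
  finally show ?thesis
    by (simp add: a_def b_def T_def algebra_simps)
qed

end
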